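(* Let $\mathcal{H}_A,\mathcal{H}_B$ have finite dimensions and let $\rho$ be any state on $\mathcal{H}_A\otimes\mathcal{H}_B$. Then $\mathcal{D}^A_G(\rho)=\mathcal{D}^A_{h=1,p=2}(\rho)$.
   Context: Let $d=\min\{\dim\mathcal{H}_A,\dim\mathcal{H}_B\}$. Let $\{A_i\}$, $\{B_j\}$ be orthonormal bases (w.r.t. the Hilbert–Schmidt inner product $\mathrm{tr}(XY)$) of the real spaces of Hermitian operators on $\mathcal{H}_A$, $\mathcal{H}_B$, and for a state $\sigma$ let $\mathcal{C}(\sigma)_{ij}=\mathrm{tr}(\sigma\,A_i\otimes B_j)$ with singular values $\sigma_1,\ldots,\sigma_{d^2}$. Then $\mathcal{M}_{1,2}(\sigma)=(\sum_k\sigma_k^2)^{1/2}$. A projective measurement $\Pi^A$ on $A$ is given by an orthonormal basis $\{|l\rangle\}$ of $\mathcal{H}_A$ and acts by $\Pi^A[\rho]=\sum_l(|l\rangle\langle l|\otimes\mathbb{1})\rho(|l\rangle\langle l|\otimes\mathbb{1})$. Define $\mathcal{D}^A_{1,2}(\rho)=\mathcal{M}_{1,2}(\rho)^2-\max_{\Pi^A}\mathcal{M}_{1,2}(\Pi^A[\rho])^2$, the maximum over all projective measurements on $A$. The geometric quantum discord is $\mathcal{D}^A_G(\rho)=\min_\chi\|\rho-\chi\|^2$ (Hilbert–Schmidt norm), minimized over classical-quantum states $\chi=\sum_k p_k|k\rangle\langle k|\otimes\chi_k$ with $\{|k\rangle\}$ an orthonormal basis of $\mathcal{H}_A$, $(p_k)$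 a probability vector and $\chi_k$ states on $\mathcal{H}_B$. *)

theory Defs
  imports "Jordan_Normal_Form.Schur_Decomposition" "HOL-Library.Complex_Order"
begin

(* H_A = C^dA, H_B = C^dB, H_A \<otimes> H_B = C^(dA*dB) with the standard
   Kronecker identification (i,k) \<mapsto> i*dB + k. *)

definition msum :: "nat \<Rightarrow> nat \<Rightarrow> ('i \<Rightarrow> complex mat) \<Rightarrow> 'i set \<Rightarrow> complex mat" where
  "msum n m f I = mat n m (\<lambda>(i, j). \<Sum>k\<in>I. f k $$ (i, j))"

definition mtrace :: "complex mat \<Rightarrow> complex" where
  "mtrace X = (\<Sum>i<dim_row X. X $$ (i, i))"

definition hermitian_mat :: "nat \<Rightarrow> complex mat \<Rightarrow> bool" where
  "hermitian_mat n X \<longleftrightarrow> X \<in> carrier_mat n n \<and> mat_adjoint X = X"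

definition is_state :: "nat \<Rightarrow> complex mat \<Rightarrow> bool" where
  "is_state n \<sigma> \<longleftrightarrow> hermitian_mat n \<sigma>
     \<and> (\<forall>v \<in> carrier_vec n. 0 \<le> (\<sigma> *\<^sub>v v) \<bullet>c v)
     \<and> mtrace \<sigma> = 1"

definition tensor_mat :: "complex mat \<Rightarrow> complex mat \<Rightarrow> complex mat" where
  "tensor_mat X Y = mat (dim_row X * dim_row Y) (dim_col X * dim_col Y)
     (\<lambda>(i, j). X $$ (i div dim_row Y, j div dim_col Y) * Y $$ (i mod dim_row Y, j mod dim_col Y))"

definition herm_onb :: "nat \<Rightarrow> (nat \<Rightarrow> complex mat) \<Rightarrow> bool" where
  "herm_onb n As \<longleftrightarrow>
     (\<forall>i < n^2. hermitian_mat n (As i))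
   \<and> (\<forall>i < n^2. \<forall>j < n^2. mtrace (As i * As j) = (if i = j then 1 else 0))
   \<and> (\<forall>X. hermitian_mat n X \<longrightarrow>
        (\<exists>c :: nat \<Rightarrow> real. X = msum n n (\<lambda>i. complex_of_real (c i) \<cdot>\<^sub>m As i) {..<n^2}))"

definition corr_entry :: "(nat \<Rightarrow> complex mat) \<Rightarrow> (nat \<Rightarrow> complex mat) \<Rightarrow> complex mat \<Rightarrow> nat \<Rightarrow> nat \<Rightarrow> complex" where
  "corr_entry As Bs \<sigma> i j = mtrace (\<sigma> * tensor_mat (As i) (Bs j))"

(* M_{1,2}(\<sigma>) = (\<Sum>_k \<sigma>_k^2)^{1/2}: the Schatten-2 (Hilbert-Schmidt/Frobenius)
   norm of the dA^2 x dB^2 correlation matrix, i.e. the square root of the sum of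
   squared moduli of its entries. *)
definition M12 :: "nat \<Rightarrow> nat \<Rightarrow> (nat \<Rightarrow> complex mat) \<Rightarrow> (nat \<Rightarrow> complex mat) \<Rightarrow> complex mat \<Rightarrow> real" where
  "M12 dA dB As Bs \<sigma> = sqrt (\<Sum>i<dA^2. \<Sum>j<dB^2. (cmod (corr_entry As Bs \<sigma> i j))^2)"

definition vec_onb :: "nat \<Rightarrow> (nat \<Rightarrow> complex vec) \<Rightarrow> bool" where
  "vec_onb n u \<longleftrightarrow> (\<forall>l < n. u l \<in> carrier_vec n)
     \<and> (\<forall>l < n. \<forall>m < n. u l \<bullet>c u m = (if l = m then 1 else 0))"

definition ket_bra :: "complex vec \<Rightarrow> complex mat" where
  "ket_bra v = mat (dim_vec v) (dim_vec v) (\<lambda>(i, j). v $ i * cnj (v $ j))"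

definition proj_meas_A :: "nat \<Rightarrow> nat \<Rightarrow> (nat \<Rightarrow> complex vec) \<Rightarrow> complex mat \<Rightarrow> complex mat" where
  "proj_meas_A dA dB u \<rho> = msum (dA * dB) (dA * dB)
     (\<lambda>l. tensor_mat (ket_bra (u l)) (1\<^sub>m dB) * \<rho> * tensor_mat (ket_bra (u l)) (1\<^sub>m dB)) {..<dA}"

definition discord12_A :: "nat \<Rightarrow> nat \<Rightarrow> (nat \<Rightarrow> complex mat) \<Rightarrow> (nat \<Rightarrow> complex mat) \<Rightarrow> complex mat \<Rightarrow> real" where
  "discord12_A dA dB As Bs \<rho> = (M12 dA dB As Bs \<rho>)^2
     - Sup {(M12 dA dB As Bs (proj_meas_A dA dB u \<rho>))^2 | u. vec_onb dA u}"

definition hs_norm_sq :: "complex mat \<Rightarrow> real" where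
  "hs_norm_sq X = Re (mtrace (mat_adjoint X * X))"

definition cq_states :: "nat \<Rightarrow> nat \<Rightarrow> complex mat set" where
  "cq_states dA dB = {msum (dA * dB) (dA * dB)
        (\<lambda>k. complex_of_real (p k) \<cdot>\<^sub>m tensor_mat (ket_bra (u k)) (\<chi> k)) {..<dA}
      | u p \<chi>. vec_onb dA u \<and> (\<forall>k < dA. 0 \<le> p k) \<and> (\<Sum>k<dA. p k) = 1
             \<and> (\<forall>k < dA. is_state dB (\<chi> k))}"

definition geometric_discord_A :: "nat \<Rightarrow> nat \<Rightarrow> complex mat \<Rightarrow> real" where
  "geometric_discord_A dA dB \<rho> = Inf {hs_norm_sq (\<rho> - \<chi>) | \<chi>. \<chi> \<in> cq_states dA dB}"

end

theory Submission
  imports Defs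
begin

(* A projective measurement Pi on A acts as the pinching X |-> sum_l Q_l X Q_l by the orthogonal
   projections Q_l = |l><l| (x) 1, so it is an orthogonal projection of the matrix space with respect
   to the Hilbert-Schmidt inner product. Pi[rho] is a classical-quantum state, and every
   classical-quantum state chi is fixed by some Pi, so by Pythagoras
   ||rho - chi||^2 = ||rho - Pi[rho]||^2 + ||Pi[rho] - chi||^2 the geometric discord is the infimum
   of ||rho - Pi[rho]||^2 over all Pi. On the other hand the correlation matrix lists the
   coefficients of sigma in the Hermitian operator basis A_i (x) B_j, so by Parseval
   M_{1,2}(sigma) = ||sigma||, and Pythagoras again gives ||rho||^2 - ||Pi[rho]||^2 = ||rho - Pi[rho]||^2:
   D_{1,2} is the same infimum. *)

section \<open>Adjoints, traces and sums of matrices\<close>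

lemma sum_lessThan_mult: "(\<Sum>t<m * n. f t) = (\<Sum>a<m. \<Sum>b<n. f (a * n + b :: nat))"
  by (simp add: sum.nat_group[symmetric] sum.shift_bounds_nat_ivl[of _ 0, simplified]
      atLeast0LessThan add.commute)

lemma div_mod_eq_iff: "(x :: nat) div d = y div d \<and> x mod d = y mod d \<longleftrightarrow> x = y"
  by (metis div_mult_mod_eq)

lemma dim_mat_adjoint [simp]:
  "dim_row (mat_adjoint X) = dim_col X" "dim_col (mat_adjoint X) = dim_row X"
  unfolding mat_adjoint_def by auto

lemma index_mat_adjoint [simp]:
  "i < dim_col X \<Longrightarrow> j < dim_row X \<Longrightarrow> mat_adjoint X $$ (i, j) = cnj (X $$ (j, i))"
  unfolding mat_adjoint_def mat_of_rows_def by (auto simp: conjugate_complex_def)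

lemma mat_adjoint_carrier_mat [simp]: "X \<in> carrier_mat n m \<Longrightarrow> mat_adjoint X \<in> carrier_mat m n"
  unfolding carrier_mat_def by simp

lemma mat_adjoint_adjoint [simp]: "mat_adjoint (mat_adjoint (X :: complex mat)) = X"
  by (rule eq_matI) auto

lemma mat_adjoint_mult:
  "(X :: complex mat) \<in> carrier_mat n k \<Longrightarrow> Y \<in> carrier_mat k m \<Longrightarrow>
    mat_adjoint (X * Y) = mat_adjoint Y * mat_adjoint X"
  by (rule eq_matI) (auto simp: scalar_prod_def mult.commute)

lemma mat_adjoint_smult: "mat_adjoint (c \<cdot>\<^sub>m (X :: complex mat)) = cnj c \<cdot>\<^sub>m mat_adjoint X"
  by (rule eq_matI) auto

lemma mat_adjoint_one [simp]: "mat_adjoint (1\<^sub>m n) = (1\<^sub>m n :: complex mat)"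
  by (rule eq_matI) auto

lemma hermitian_mat_cnj:
  "hermitian_mat n X \<Longrightarrow> i < n \<Longrightarrow> j < n \<Longrightarrow> cnj (X $$ (i, j)) = X $$ (j, i)"
  unfolding hermitian_mat_def by (metis carrier_matD index_mat_adjoint)

lemma mult_sandwich_assoc:
  assumes V: "V \<in> carrier_mat n m" and W: "W \<in> carrier_mat m n" and R: "R \<in> carrier_mat n n"
  shows "(V * W) * R * (V * W) = V * (W * R * V) * W"
proof -
  have WR: "W * R \<in> carrier_mat m n" and WRV: "W * R * V \<in> carrier_mat m m"
    and VW: "V * W \<in> carrier_mat n n"
    using V W R by auto
  have "(V * W) * R * (V * W) = V * (W * R) * (V * W)"
    using assoc_mult_mat[OF V W R] by simp
  also have "\<dots> = V * (W * R * (V * W))"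
    using assoc_mult_mat[OF V WR VW] .
  also have "W * R * (V * W) = W * R * V * W"
    using assoc_mult_mat[OF WR V W] by simp
  also have "V * (W * R * V * W) = V * (W * R * V) * W"
    using assoc_mult_mat[OF V WRV W] by simp
  finally show ?thesis .
qed

lemma mtrace_mult_eq_sum:
  "X \<in> carrier_mat n m \<Longrightarrow> Y \<in> carrier_mat m n \<Longrightarrow>
    mtrace (X * Y) = (\<Sum>i<n. \<Sum>k<m. X $$ (i, k) * Y $$ (k, i))"
  unfolding mtrace_def by (auto simp: scalar_prod_def atLeast0LessThan intro!: sum.cong)

lemma mtrace_mult_comm:
  "X \<in> carrier_mat n m \<Longrightarrow> Y \<in> carrier_mat m n \<Longrightarrow> mtrace (X * Y) = mtrace (Y * X)"
  by (simp add: mtrace_mult_eq_sum sum.swap[of _ "{..<n}"] mult.commute)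

lemma msum_carrier_mat [simp]:
  "msum n m f I \<in> carrier_mat n m" "dim_row (msum n m f I) = n" "dim_col (msum n m f I) = m"
  unfolding msum_def by auto

lemma index_msum [simp]:
  "i < n \<Longrightarrow> j < m \<Longrightarrow> msum n m f I $$ (i, j) = (\<Sum>k\<in>I. f k $$ (i, j))"
  unfolding msum_def by auto

lemma msum_cong: "(\<And>k. k \<in> I \<Longrightarrow> f k = g k) \<Longrightarrow> msum n m f I = msum n m g I"
  unfolding msum_def by (auto intro!: cong_mat sum.cong)

lemma msum_mult_left:
  assumes "\<And>k. k \<in> I \<Longrightarrow> f k \<in> carrier_mat p m" and "X \<in> carrier_mat n p"
  shows "X * msum p m f I = msum n m (\<lambda>k. X * f k) I"
proof -
  have "dim_row (f k) = p \<and> dim_col (f k) = m" if "k \<in> I" for k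
    using assms(1)[OF that] by auto
  with assms(2) show ?thesis
    by (intro eq_matI) (auto simp: scalar_prod_def sum_distrib_left sum.swap[of _ I] intro!: sum.cong)
qed

lemma msum_mult_right:
  assumes "\<And>k. k \<in> I \<Longrightarrow> f k \<in> carrier_mat n p" and "X \<in> carrier_mat p m"
  shows "msum n p f I * X = msum n m (\<lambda>k. f k * X) I"
proof -
  have "dim_row (f k) = n \<and> dim_col (f k) = p" if "k \<in> I" for k
    using assms(1)[OF that] by auto
  with assms(2) show ?thesis
    by (intro eq_matI) (auto simp: scalar_prod_def sum_distrib_right sum.swap[of _ I] intro!: sum.cong)
qed

lemma msum_diff:
  assumes "\<And>k. k \<in> I \<Longrightarrow> f k \<in> carrier_mat n m" and "\<And>k. k \<in> I \<Longrightarrow> g k \<in> carrier_mat n m"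
  shows "msum n m f I - msum n m g I = msum n m (\<lambda>k. f k - g k) I"
proof -
  have "dim_row (f k) = n \<and> dim_col (f k) = m \<and> dim_row (g k) = n \<and> dim_col (g k) = m"
    if "k \<in> I" for k
    using assms[OF that] by auto
  then show ?thesis
    by (intro eq_matI) (auto simp: sum_subtractf[symmetric] intro!: sum.cong)
qed

lemma msum_delta:
  assumes "finite I" "l \<in> I" "f l \<in> carrier_mat n m"
  shows "msum n m (\<lambda>k. if k = l then f k else 0\<^sub>m n m) I = f l"
  using assms by (intro eq_matI) (auto simp: if_distrib[of "\<lambda>X. X $$ _"] cong: if_cong)

section \<open>Kronecker products and rank-one projections\<close>

lemma dim_tensor_mat [simp]:
  "dim_row (tensor_mat X Y) = dim_row X * dim_row Y"
  "dim_col (tensor_mat X Y) = dim_col X * dim_col Y"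
  unfolding tensor_mat_def by auto

lemma tensor_mat_carrier_mat [simp]:
  "X \<in> carrier_mat n1 m1 \<Longrightarrow> Y \<in> carrier_mat n2 m2 \<Longrightarrow> tensor_mat X Y \<in> carrier_mat (n1 * n2) (m1 * m2)"
  unfolding carrier_mat_def by simp

lemma index_tensor_mat [simp]:
  "i < dim_row X * dim_row Y \<Longrightarrow> j < dim_col X * dim_col Y \<Longrightarrow>
    tensor_mat X Y $$ (i, j) = X $$ (i div dim_row Y, j div dim_col Y) * Y $$ (i mod dim_row Y, j mod dim_col Y)"
  unfolding tensor_mat_def by simp

lemma div_mod_less_mult:
  assumes "(i :: nat) < m * n"
  shows "i div n < m" "i mod n < n"
  using assms by (auto simp: less_mult_imp_div_less intro!: mod_less_divisor gr0I)

lemma tensor_mat_mult: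
  assumes X: "X \<in> carrier_mat n1 k1" and Y: "Y \<in> carrier_mat n2 k2"
    and Z: "Z \<in> carrier_mat k1 m1" and W: "W \<in> carrier_mat k2 m2"
  shows "tensor_mat X Y * tensor_mat Z W = tensor_mat (X * Z) (Y * W)"
proof (rule eq_matI)
  fix i j
  assume "i < dim_row (tensor_mat (X * Z) (Y * W))" "j < dim_col (tensor_mat (X * Z) (Y * W))"
  then have i: "i < n1 * n2" and j: "j < m1 * m2"
    using X Y Z W by auto
  have "(tensor_mat X Y * tensor_mat Z W) $$ (i, j)
      = (\<Sum>t<k1 * k2. X $$ (i div n2, t div k2) * Y $$ (i mod n2, t mod k2)
                       * (Z $$ (t div k2, j div m2) * W $$ (t mod k2, j mod m2)))"
    using i j X Y Z W by (auto simp: scalar_prod_def atLeast0LessThan intro!: sum.cong)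
  also have "\<dots> = (\<Sum>a<k1. \<Sum>b<k2. X $$ (i div n2, a) * Y $$ (i mod n2, b)
                       * (Z $$ (a, j div m2) * W $$ (b, j mod m2)))"
    by (simp add: sum_lessThan_mult)
  also have "\<dots> = (\<Sum>a<k1. X $$ (i div n2, a) * Z $$ (a, j div m2))
                  * (\<Sum>b<k2. Y $$ (i mod n2, b) * W $$ (b, j mod m2))"
    unfolding sum_product by (intro sum.cong refl) (simp add: mult_ac)
  also have "\<dots> = tensor_mat (X * Z) (Y * W) $$ (i, j)"
    using i j X Y Z W div_mod_less_mult[OF i] div_mod_less_mult[OF j]
    by (simp add: scalar_prod_def atLeast0LessThan)
  finally show "(tensor_mat X Y * tensor_mat Z W) $$ (i, j) = tensor_mat (X * Z) (Y * W) $$ (i, j)" .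
qed (use X Y Z W in auto)

lemma mat_adjoint_tensor_mat: "mat_adjoint (tensor_mat X Y) = tensor_mat (mat_adjoint X) (mat_adjoint Y)"
  by (rule eq_matI) (auto simp: div_mod_less_mult)

lemma smult_tensor_mat: "c \<cdot>\<^sub>m tensor_mat X Y = tensor_mat X (c \<cdot>\<^sub>m Y)"
  by (rule eq_matI) (auto simp: div_mod_less_mult)

lemma tensor_mat_one: "tensor_mat (1\<^sub>m a) (1\<^sub>m b) = 1\<^sub>m (a * b)"
proof (rule eq_matI)
  fix i j assume "i < dim_row (1\<^sub>m (a * b) :: complex mat)" "j < dim_col (1\<^sub>m (a * b) :: complex mat)"
  then have ij: "i < a * b" "j < a * b" by auto
  then show "tensor_mat (1\<^sub>m a) (1\<^sub>m b) $$ (i, j) = 1\<^sub>m (a * b) $$ (i, j)"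
    using div_mod_eq_iff[of i b j] div_mod_less_mult[OF ij(1)] div_mod_less_mult[OF ij(2)] by auto
qed auto

lemma tensor_mat_one_left: "tensor_mat (1\<^sub>m 1) Y = Y"
  by (rule eq_matI) auto

lemma tensor_mat_zero_left: "tensor_mat (0\<^sub>m n1 m1) Y = 0\<^sub>m (n1 * dim_row Y) (m1 * dim_col Y)"
  by (rule eq_matI) (auto simp: div_mod_less_mult)

lemma msum_tensor_mat_left:
  assumes "\<And>k. k \<in> I \<Longrightarrow> f k \<in> carrier_mat n1 m1" and "Y \<in> carrier_mat n2 m2"
  shows "msum (n1 * n2) (m1 * m2) (\<lambda>k. tensor_mat (f k) Y) I = tensor_mat (msum n1 m1 f I) Y"
proof -
  have "dim_row (f k) = n1 \<and> dim_col (f k) = m1" if "k \<in> I" for k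
    using assms(1)[OF that] by auto
  with assms(2) show ?thesis
    by (intro eq_matI) (auto simp: div_mod_less_mult sum_distrib_right intro!: sum.cong)
qed

lemma dim_ket_bra [simp]: "dim_row (ket_bra v) = dim_vec v" "dim_col (ket_bra v) = dim_vec v"
  unfolding ket_bra_def by auto

lemma ket_bra_carrier_mat [simp]: "v \<in> carrier_vec n \<Longrightarrow> ket_bra v \<in> carrier_mat n n"
  unfolding carrier_mat_def carrier_vec_def by simp

lemma index_ket_bra [simp]:
  "i < dim_vec v \<Longrightarrow> j < dim_vec v \<Longrightarrow> ket_bra v $$ (i, j) = v $ i * cnj (v $ j)"
  unfolding ket_bra_def by simp

lemma mat_adjoint_ket_bra: "mat_adjoint (ket_bra v) = ket_bra v"
  by (rule eq_matI) auto

lemma cscalar_prod_eq_sum: "w \<in> carrier_vec n \<Longrightarrow> v \<bullet>c w = (\<Sum>i<n. v $ i * cnj (w $ i))"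
  unfolding scalar_prod_def by (auto simp: atLeast0LessThan conjugate_complex_def intro!: sum.cong)

lemma vec_onb_carrier_vec: "vec_onb n u \<Longrightarrow> l < n \<Longrightarrow> u l \<in> carrier_vec n"
  unfolding vec_onb_def by auto

lemma ket_bra_mult_ket_bra:
  assumes "vec_onb n u" "l < n" "m < n"
  shows "ket_bra (u l) * ket_bra (u m) = (if l = m then ket_bra (u l) else 0\<^sub>m n n)"
proof (rule eq_matI)
  have u: "u l \<in> carrier_vec n" "u m \<in> carrier_vec n"
    using assms vec_onb_carrier_vec by auto
  fix i j assume "i < dim_row (if l = m then ket_bra (u l) else 0\<^sub>m n n)"
    "j < dim_col (if l = m then ket_bra (u l) else 0\<^sub>m n n)"
  then have ij: "i < n" "j < n"
    using u by (auto split: if_splits)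
  have "(ket_bra (u l) * ket_bra (u m)) $$ (i, j) = (\<Sum>t<n. u m $ t * cnj (u l $ t)) * (u l $ i * cnj (u m $ j))"
    using u ij
    by (auto simp: scalar_prod_def atLeast0LessThan sum_distrib_left sum_distrib_right mult_ac intro!: sum.cong)
  also have "\<dots> = (u m \<bullet>c u l) * (u l $ i * cnj (u m $ j))"
    using u by (simp add: cscalar_prod_eq_sum)
  also have "\<dots> = (if l = m then ket_bra (u l) else 0\<^sub>m n n) $$ (i, j)"
    using assms u ij unfolding vec_onb_def by auto
  finally show "(ket_bra (u l) * ket_bra (u m)) $$ (i, j) = \<dots>" .
qed (use assms vec_onb_carrier_vec in auto)

lemma msum_ket_bra_vec_onb:
  assumes u: "vec_onb n u"
  shows "msum n n (\<lambda>k. ket_bra (u k)) {..<n} = 1\<^sub>m n"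
proof -
  define U where "U = mat n n (\<lambda>(i, k). u k $ i)"
  have U: "U \<in> carrier_mat n n"
    unfolding U_def by simp
  have uc: "u k \<in> carrier_vec n" "dim_vec (u k) = n" if "k < n" for k
    using vec_onb_carrier_vec[OF u that] by auto
  have "mat_adjoint U * U = 1\<^sub>m n"
  proof (rule eq_matI)
    fix k m assume "k < dim_row (1\<^sub>m n :: complex mat)" "m < dim_col (1\<^sub>m n :: complex mat)"
    then have km: "k < n" "m < n" by auto
    then have "(mat_adjoint U * U) $$ (k, m) = u m \<bullet>c u k"
      using U unfolding U_def
      by (auto simp: uc scalar_prod_def atLeast0LessThan mult.commute cscalar_prod_eq_sum intro!: sum.cong)
    then show "(mat_adjoint U * U) $$ (k, m) = 1\<^sub>m n $$ (k, m)"
      using u km unfolding vec_onb_def by auto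
  qed (use U in auto)
  then have "U * mat_adjoint U = 1\<^sub>m n"
    using mat_mult_left_right_inverse[of "mat_adjoint U" n U] U by simp
  moreover have "msum n n (\<lambda>k. ket_bra (u k)) {..<n} = U * mat_adjoint U"
    using U unfolding U_def
    by (intro eq_matI) (auto simp: uc scalar_prod_def atLeast0LessThan intro!: sum.cong)
  ultimately show ?thesis
    by simp
qed

lemma vec_onb_unit_vec: "vec_onb n (unit_vec n)"
  unfolding vec_onb_def by (auto simp: cscalar_prod_eq_sum unit_vec_def if_distrib cong: if_cong)

section \<open>The Hilbert--Schmidt inner product and pinchings\<close>

definition hs_inner :: "complex mat \<Rightarrow> complex mat \<Rightarrow> complex" where
  "hs_inner X Y = mtrace (mat_adjoint X * Y)"

lemma hs_norm_sq_eq_Re_hs_inner: "hs_norm_sq X = Re (hs_inner X X)"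
  unfolding hs_norm_sq_def hs_inner_def ..

lemma hs_inner_eq_sum:
  assumes "X \<in> carrier_mat n m" "Y \<in> carrier_mat n m"
  shows "hs_inner X Y = (\<Sum>i<n. \<Sum>j<m. cnj (X $$ (i, j)) * Y $$ (i, j))"
  using assms unfolding hs_inner_def
  by (subst mtrace_mult_eq_sum[of _ m n]) (auto simp: sum.swap[of _ "{..<m}"] intro!: sum.cong)

lemma hs_norm_sq_eq_sum:
  assumes "X \<in> carrier_mat n m"
  shows "hs_norm_sq X = (\<Sum>i<n. \<Sum>j<m. (cmod (X $$ (i, j)))\<^sup>2)"
proof -
  have "Re (cnj z * z) = (cmod z)\<^sup>2" for z :: complex
    using complex_norm_square[of z] by (metis Re_complex_of_real mult.commute)
  then show ?thesis
    using assms by (simp add: hs_norm_sq_eq_Re_hs_inner hs_inner_eq_sum[of _ n m] Re_sum)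
qed

lemma cmod_add_square: "(cmod (a + b))\<^sup>2 = (cmod a)\<^sup>2 + (cmod b)\<^sup>2 + 2 * Re (cnj a * b)"
  unfolding cmod_power2 by (simp add: power2_eq_square algebra_simps)

lemma hs_norm_sq_nonneg: "X \<in> carrier_mat n m \<Longrightarrow> 0 \<le> hs_norm_sq X"
  by (simp add: hs_norm_sq_eq_sum sum_nonneg)

lemma hs_norm_sq_add:
  assumes "X \<in> carrier_mat n m" "Y \<in> carrier_mat n m"
  shows "hs_norm_sq (X + Y) = hs_norm_sq X + hs_norm_sq Y + 2 * Re (hs_inner X Y)"
  using assms
  by (simp add: hs_norm_sq_eq_sum[of _ n m] hs_inner_eq_sum[of _ n m] cmod_add_square Re_sum
      sum.distrib sum_distrib_left)

lemma hs_inner_msum_left: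
  assumes "\<And>k. k \<in> I \<Longrightarrow> f k \<in> carrier_mat n m" "Y \<in> carrier_mat n m"
  shows "hs_inner (msum n m f I) Y = (\<Sum>k\<in>I. hs_inner (f k) Y)"
proof -
  have "hs_inner (msum n m f I) Y = (\<Sum>k\<in>I. \<Sum>i<n. \<Sum>j<m. cnj (f k $$ (i, j)) * Y $$ (i, j))"
    using assms(2) by (simp add: hs_inner_eq_sum[of _ n m] cnj_sum sum_distrib_right sum.swap[of _ I])
  also have "\<dots> = (\<Sum>k\<in>I. hs_inner (f k) Y)"
    using assms by (intro sum.cong refl) (simp add: hs_inner_eq_sum[of _ n m])
  finally show ?thesis .
qed

lemma hs_inner_msum_right:
  assumes "X \<in> carrier_mat n m" "\<And>k. k \<in> I \<Longrightarrow> f k \<in> carrier_mat n m"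
  shows "hs_inner X (msum n m f I) = (\<Sum>k\<in>I. hs_inner X (f k))"
proof -
  have "hs_inner X (msum n m f I) = (\<Sum>k\<in>I. \<Sum>i<n. \<Sum>j<m. cnj (X $$ (i, j)) * f k $$ (i, j))"
    using assms(1) by (simp add: hs_inner_eq_sum[of _ n m] sum_distrib_left sum.swap[of _ I])
  also have "\<dots> = (\<Sum>k\<in>I. hs_inner X (f k))"
    using assms by (intro sum.cong refl) (simp add: hs_inner_eq_sum[of _ n m])
  finally show ?thesis .
qed

lemma hs_inner_sandwich:
  assumes Q: "hermitian_mat n Q" and X: "X \<in> carrier_mat n n" and Y: "Y \<in> carrier_mat n n"
  shows "hs_inner (Q * X * Q) Y = hs_inner X (Q * Y * Q)"
proof -
  have Qc: "Q \<in> carrier_mat n n" and Qa: "mat_adjoint Q = Q"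
    using Q unfolding hermitian_mat_def by auto
  have Xa: "mat_adjoint X \<in> carrier_mat n n"
    using X by simp
  have "mat_adjoint (Q * X * Q) = Q * mat_adjoint X * Q"
    using Qc X by (simp add: mat_adjoint_mult[of _ n n _ n] Qa)
  then have "hs_inner (Q * X * Q) Y = mtrace (Q * (mat_adjoint X * Q * Y))"
    unfolding hs_inner_def using Qc Xa Y by (simp add: assoc_mult_mat[of _ n n _ n _ n])
  also have "\<dots> = mtrace (mat_adjoint X * Q * Y * Q)"
    using Qc Xa Y by (subst mtrace_mult_comm[of _ n n]) auto
  also have "\<dots> = hs_inner X (Q * Y * Q)"
    unfolding hs_inner_def using Qc Xa Y by (simp add: assoc_mult_mat[of _ n n _ n _ n])
  finally show ?thesis .
qed

definition orthogonal_projections :: "nat \<Rightarrow> ('i \<Rightarrow> complex mat) \<Rightarrow> 'i set \<Rightarrow> bool" where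
  "orthogonal_projections n Q I \<longleftrightarrow> (\<forall>l\<in>I. hermitian_mat n (Q l))
     \<and> (\<forall>l\<in>I. \<forall>m\<in>I. Q l * Q m = (if l = m then Q l else 0\<^sub>m n n))"

definition pinching :: "nat \<Rightarrow> ('i \<Rightarrow> complex mat) \<Rightarrow> 'i set \<Rightarrow> complex mat \<Rightarrow> complex mat" where
  "pinching n Q I X = msum n n (\<lambda>l. Q l * X * Q l) I"

lemma orthogonal_projections_carrier_mat:
  "orthogonal_projections n Q I \<Longrightarrow> l \<in> I \<Longrightarrow> Q l \<in> carrier_mat n n"
  unfolding orthogonal_projections_def hermitian_mat_def by auto

lemma orthogonal_projections_sandwich_carrier_mat:
  "orthogonal_projections n Q I \<Longrightarrow> l \<in> I \<Longrightarrow> X \<in> carrier_mat n n \<Longrightarrow> Q l * X * Q l \<in> carrier_mat n n"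
  using orthogonal_projections_carrier_mat[of n Q I l] by simp

lemma pinching_carrier_mat [simp]:
  "pinching n Q I X \<in> carrier_mat n n" "dim_row (pinching n Q I X) = n" "dim_col (pinching n Q I X) = n"
  unfolding pinching_def by simp_all

lemma pinching_sandwich_sum:
  assumes I: "finite I" and Q: "orthogonal_projections n Q I"
    and Z: "\<And>k. k \<in> I \<Longrightarrow> Z k \<in> carrier_mat n n"
  shows "pinching n Q I (msum n n (\<lambda>k. Q k * Z k * Q k) I) = msum n n (\<lambda>k. Q k * Z k * Q k) I"
  unfolding pinching_def
proof (rule msum_cong)
  fix l assume l: "l \<in> I"
  have Qc: "Q k \<in> carrier_mat n n" if "k \<in> I" for k
    using Q that by (rule orthogonal_projections_carrier_mat)
  have QZQ: "Q k * Z k * Q k \<in> carrier_mat n n" if "k \<in> I" for k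
    using Qc[OF that] Z[OF that] by simp
  have QQ: "Q l * Q k = (if l = k then Q l else 0\<^sub>m n n)" "Q k * Q l = (if l = k then Q l else 0\<^sub>m n n)"
    if "k \<in> I" for k
    using Q l that unfolding orthogonal_projections_def by auto
  have summand: "Q l * (Q k * Z k * Q k) * Q l = (if k = l then Q l * Z l * Q l else 0\<^sub>m n n)"
    if k: "k \<in> I" for k
  proof -
    have "Q l * (Q k * Z k * Q k) * Q l = (Q l * Q k) * Z k * (Q k * Q l)"
      using Qc[OF l] Qc[OF k] Z[OF k] by (simp add: assoc_mult_mat[of _ n n _ n _ n])
    then show ?thesis
      using QQ[OF k] Qc[OF l] Z[OF k] by auto
  qed
  have "Q l * msum n n (\<lambda>k. Q k * Z k * Q k) I * Q l = msum n n (\<lambda>k. Q l * (Q k * Z k * Q k)) I * Q l"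
    using Qc[OF l] QZQ by (subst msum_mult_left) auto
  also have "\<dots> = msum n n (\<lambda>k. Q l * (Q k * Z k * Q k) * Q l) I"
    using Qc[OF l] QZQ by (intro msum_mult_right) auto
  also have "\<dots> = msum n n (\<lambda>k. if k = l then Q l * Z l * Q l else 0\<^sub>m n n) I"
    using summand by (rule msum_cong)
  also have "\<dots> = Q l * Z l * Q l"
    using msum_delta[OF I l, of "\<lambda>_. Q l * Z l * Q l"] Qc[OF l] Z[OF l] by simp
  finally show "Q l * msum n n (\<lambda>k. Q k * Z k * Q k) I * Q l = Q l * Z l * Q l" .
qed

lemma pinching_idem:
  "finite I \<Longrightarrow> orthogonal_projections n Q I \<Longrightarrow> X \<in> carrier_mat n n \<Longrightarrow>
    pinching n Q I (pinching n Q I X) = pinching n Q I X"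
  using pinching_sandwich_sum[of I n Q "\<lambda>_. X"] by (simp add: pinching_def)

lemma pinching_diff:
  assumes Q: "orthogonal_projections n Q I" and X: "X \<in> carrier_mat n n" and Y: "Y \<in> carrier_mat n n"
  shows "pinching n Q I (X - Y) = pinching n Q I X - pinching n Q I Y"
proof -
  have Qc: "Q l \<in> carrier_mat n n" if "l \<in> I" for l
    using Q that by (rule orthogonal_projections_carrier_mat)
  have "pinching n Q I X - pinching n Q I Y = msum n n (\<lambda>l. Q l * X * Q l - Q l * Y * Q l) I"
    unfolding pinching_def using Q X Y by (intro msum_diff) (auto intro: orthogonal_projections_sandwich_carrier_mat)
  also have "\<dots> = pinching n Q I (X - Y)"
  proof -
    have "Q l * (X - Y) * Q l = Q l * X * Q l - Q l * Y * Q l" if "l \<in> I" for l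
      using Qc[OF that] X Y by (simp add: mult_minus_distrib_mat[of _ n n] minus_mult_distrib_mat[of _ n n])
    then show ?thesis
      unfolding pinching_def by (intro msum_cong) simp
  qed
  finally show ?thesis ..
qed

lemma pinching_zero:
  assumes Q: "orthogonal_projections n Q I"
  shows "pinching n Q I (0\<^sub>m n n) = 0\<^sub>m n n"
proof -
  have "Q l * 0\<^sub>m n n * Q l = 0\<^sub>m n n" if "l \<in> I" for l
    using right_mult_zero_mat left_mult_zero_mat orthogonal_projections_carrier_mat[OF Q that] by metis
  then show ?thesis
    unfolding pinching_def by (intro eq_matI) auto
qed

lemma hs_inner_pinching:
  assumes Q: "orthogonal_projections n Q I" and X: "X \<in> carrier_mat n n" and Y: "Y \<in> carrier_mat n n"
  shows "hs_inner (pinching n Q I X) Y = hs_inner X (pinching n Q I Y)"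
proof -
  have "hermitian_mat n (Q l)" if "l \<in> I" for l
    using Q that unfolding orthogonal_projections_def by auto
  then have "hs_inner (Q l * X * Q l) Y = hs_inner X (Q l * Y * Q l)" if "l \<in> I" for l
    using hs_inner_sandwich X Y that by blast
  then show ?thesis
    unfolding pinching_def using Q X Y
    by (simp add: hs_inner_msum_left[of _ _ n n] hs_inner_msum_right[of _ n n]
        orthogonal_projections_sandwich_carrier_mat)
qed

lemma hs_norm_sq_pinching_pythagoras:
  assumes I: "finite I" and Q: "orthogonal_projections n Q I"
    and X: "X \<in> carrier_mat n n" and Y: "Y \<in> carrier_mat n n" and fixed: "pinching n Q I Y = Y"
  shows "hs_norm_sq (X - Y) = hs_norm_sq (X - pinching n Q I X) + hs_norm_sq (pinching n Q I X - Y)"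
proof -
  let ?P = "pinching n Q I"
  have diffs: "X - ?P X \<in> carrier_mat n n" "X - Y \<in> carrier_mat n n"
    using Y by (auto intro: minus_carrier_mat)
  then have "hs_inner (X - ?P X) (?P X - Y) = hs_inner (?P (X - ?P X)) (X - Y)"
    using hs_inner_pinching[OF Q] pinching_diff[OF Q X Y] fixed by simp
  also have "?P (X - ?P X) = 0\<^sub>m n n"
    using pinching_diff[OF Q X] pinching_idem[OF I Q X] by simp
  finally have "hs_inner (X - ?P X) (?P X - Y) = 0"
    using diffs by (simp add: hs_inner_eq_sum[of _ n n])
  moreover have "X - Y = (X - ?P X) + (?P X - Y)"
    using X Y by (intro eq_matI) auto
  ultimately show ?thesis
    using diffs(1) minus_carrier_mat[OF Y] hs_norm_sq_add[of "X - ?P X" n n "?P X - Y"] by simp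
qed

section \<open>Parseval's identity for the correlation matrix\<close>

(* The completeness relation sum_i T_i(p,q) conj (T_i(a,b)) = delta_pa delta_qb of an orthonormal
   basis of Hermitian matrices, with the conjugate already resolved by hermiticity. *)
definition complete_operator_family :: "nat \<Rightarrow> 'i set \<Rightarrow> ('i \<Rightarrow> complex mat) \<Rightarrow> bool" where
  "complete_operator_family n I T \<longleftrightarrow> (\<forall>p<n. \<forall>q<n. \<forall>a<n. \<forall>b<n.
     (\<Sum>i\<in>I. T i $$ (p, q) * T i $$ (b, a)) = (if p = a \<and> q = b then 1 else 0))"

lemma herm_onb_carrier_mat: "herm_onb n As \<Longrightarrow> i < n\<^sup>2 \<Longrightarrow> As i \<in> carrier_mat n n"
  unfolding herm_onb_def hermitian_mat_def by auto

lemma herm_onb_expansion_hermitian: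
  assumes onb: "herm_onb n As" and H: "hermitian_mat n H" and pq: "p < n" "q < n"
  shows "H $$ (p, q) = (\<Sum>i<n\<^sup>2. mtrace (H * As i) * As i $$ (p, q))"
proof -
  have A: "As i \<in> carrier_mat n n" if "i < n\<^sup>2" for i
    using onb that by (rule herm_onb_carrier_mat)
  obtain c where c: "H = msum n n (\<lambda>i. complex_of_real (c i) \<cdot>\<^sub>m As i) {..<n\<^sup>2}"
    using onb H unfolding herm_onb_def by blast
  have H_entry: "H $$ (r, s) = (\<Sum>i<n\<^sup>2. complex_of_real (c i) * As i $$ (r, s))" if "r < n" "s < n" for r s
  proof -
    have "dim_row (As i) = n \<and> dim_col (As i) = n" if "i < n\<^sup>2" for i
      using A[OF that] by auto
    with that show ?thesis
      by (subst c) (auto intro!: sum.cong)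
  qed
  have "mtrace (H * As k) = complex_of_real (c k)" if k: "k < n\<^sup>2" for k
  proof -
    have "mtrace (H * As k) = (\<Sum>r<n. \<Sum>s<n. \<Sum>i<n\<^sup>2. complex_of_real (c i) * (As i $$ (r, s) * As k $$ (s, r)))"
      using H A[OF k] unfolding hermitian_mat_def
      by (simp add: mtrace_mult_eq_sum[of _ n n] H_entry sum_distrib_right mult.assoc)
    also have "\<dots> = (\<Sum>i<n\<^sup>2. complex_of_real (c i) * mtrace (As i * As k))"
      using A k by (simp add: mtrace_mult_eq_sum[of _ n n] sum_distrib_left sum.swap[of _ "{..<n\<^sup>2}"])
    also have "\<dots> = complex_of_real (c k)"
      using onb k unfolding herm_onb_def by (simp add: if_distrib[of "(*) _"] cong: if_cong)
    finally show ?thesis .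
  qed
  then show ?thesis
    using H_entry[OF pq] by simp
qed

lemma herm_onb_expansion:
  assumes onb: "herm_onb n As" and X: "X \<in> carrier_mat n n" and pq: "p < n" "q < n"
  shows "X $$ (p, q) = (\<Sum>i<n\<^sup>2. mtrace (X * As i) * As i $$ (p, q))"
proof -
  define H1 where "H1 = mat n n (\<lambda>(r, s). (X $$ (r, s) + cnj (X $$ (s, r))) / 2)"
  define H2 where "H2 = mat n n (\<lambda>(r, s). (X $$ (r, s) - cnj (X $$ (s, r))) * (- \<i> / 2))"
  have H: "hermitian_mat n H1" "hermitian_mat n H2"
    unfolding hermitian_mat_def H1_def H2_def by (auto intro!: eq_matI simp: algebra_simps)
  have X_split: "X $$ (r, s) = H1 $$ (r, s) + \<i> * H2 $$ (r, s)" if "r < n" "s < n" for r s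
    using that unfolding H1_def H2_def by (simp add: algebra_simps add_divide_distrib[symmetric])
  have trace_split: "mtrace (X * As i) = mtrace (H1 * As i) + \<i> * mtrace (H2 * As i)" if "i < n\<^sup>2" for i
    using X H herm_onb_carrier_mat[OF onb that] unfolding hermitian_mat_def
    by (simp add: mtrace_mult_eq_sum[of _ n n] X_split algebra_simps sum.distrib sum_distrib_left)
  show ?thesis
    using herm_onb_expansion_hermitian[OF onb H(1) pq] herm_onb_expansion_hermitian[OF onb H(2) pq]
    by (simp add: X_split[OF pq] trace_split algebra_simps sum.distrib sum_distrib_left)
qed

lemma herm_onb_complete: "herm_onb n As \<Longrightarrow> complete_operator_family n {..<n\<^sup>2} As"
  unfolding complete_operator_family_def
proof (intro allI impI)
  fix p q a b assume onb: "herm_onb n As" and idx: "p < n" "q < n" "a < n" "b < n"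
  define E :: "complex mat" where "E = mat n n (\<lambda>(r, s). if r = a then if s = b then 1 else 0 else 0)"
  have if_sum: "(\<Sum>s<n. if r = a then f s else 0) = (if r = a then \<Sum>s<n. f s else 0)" for r and f :: "nat \<Rightarrow> complex"
    by simp
  have "mtrace (E * As i) = As i $$ (b, a)" if "i < n\<^sup>2" for i
    using herm_onb_carrier_mat[OF onb that] idx unfolding E_def
    by (simp add: mtrace_mult_eq_sum[of _ n n] if_distrib[of "\<lambda>x. x * _"] if_sum cong: if_cong)
  then have "(\<Sum>i<n\<^sup>2. As i $$ (p, q) * As i $$ (b, a)) = E $$ (p, q)"
    using herm_onb_expansion[OF onb _ idx(1,2), of E] unfolding E_def by (simp add: mult.commute)
  then show "(\<Sum>i<n\<^sup>2. As i $$ (p, q) * As i $$ (b, a)) = (if p = a \<and> q = b then 1 else 0)"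
    using idx unfolding E_def by simp
qed

lemma complete_operator_family_tensor:
  assumes A: "complete_operator_family n I A" "\<And>i. i \<in> I \<Longrightarrow> A i \<in> carrier_mat n n"
    and B: "complete_operator_family m J B" "\<And>j. j \<in> J \<Longrightarrow> B j \<in> carrier_mat m m"
  shows "complete_operator_family (n * m) (I \<times> J) (\<lambda>(i, j). tensor_mat (A i) (B j))"
  unfolding complete_operator_family_def
proof (intro allI impI)
  fix p q a b assume idx: "p < n * m" "q < n * m" "a < n * m" "b < n * m"
  have dims: "dim_row (A i) = n \<and> dim_col (A i) = n \<and> dim_row (B j) = m \<and> dim_col (B j) = m"
    if "i \<in> I" "j \<in> J" for i j
    using A(2)[OF that(1)] B(2)[OF that(2)] by auto
  have "(\<Sum>ij\<in>I \<times> J. (case ij of (i, j) \<Rightarrow> tensor_mat (A i) (B j)) $$ (p, q)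
          * (case ij of (i, j) \<Rightarrow> tensor_mat (A i) (B j)) $$ (b, a))
      = (\<Sum>i\<in>I. A i $$ (p div m, q div m) * A i $$ (b div m, a div m))
        * (\<Sum>j\<in>J. B j $$ (p mod m, q mod m) * B j $$ (b mod m, a mod m))"
    unfolding sum_product sum.cartesian_product using idx dims
    by (intro sum.cong refl) (auto simp: mult_ac)
  also have "\<dots> = (if p div m = a div m \<and> q div m = b div m then 1 else 0)
                  * (if p mod m = a mod m \<and> q mod m = b mod m then 1 else 0)"
    using A(1) B(1) idx div_mod_less_mult unfolding complete_operator_family_def by simp
  also have "\<dots> = (if p = a \<and> q = b then 1 else 0)"
    using div_mod_eq_iff[of p m a] div_mod_eq_iff[of q m b] by auto
  finally show "(\<Sum>ij\<in>I \<times> J. (case ij of (i, j) \<Rightarrow> tensor_mat (A i) (B j)) $$ (p, q)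
          * (case ij of (i, j) \<Rightarrow> tensor_mat (A i) (B j)) $$ (b, a)) = (if p = a \<and> q = b then 1 else 0)" .
qed

lemma parseval_complete_operator_family:
  assumes T: "complete_operator_family N I T" "\<And>i. i \<in> I \<Longrightarrow> hermitian_mat N (T i)"
    and X: "X \<in> carrier_mat N N"
  shows "(\<Sum>i\<in>I. (cmod (mtrace (X * T i)))\<^sup>2) = hs_norm_sq X"
proof -
  define c where "c i = mtrace (X * T i)" for i
  have c_sum: "c i = (\<Sum>x<N. \<Sum>y<N. X $$ (x, y) * T i $$ (y, x))" if "i \<in> I" for i
    unfolding c_def using X T(2)[OF that] unfolding hermitian_mat_def by (simp add: mtrace_mult_eq_sum)
  have cnj_c_sum: "cnj (c i) = (\<Sum>x<N. \<Sum>y<N. cnj (X $$ (x, y)) * T i $$ (x, y))" if "i \<in> I" for i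
    using hermitian_mat_cnj[OF T(2)[OF that]] by (simp add: c_sum[OF that] cnj_sum)
  have cnj_c: "(\<Sum>i\<in>I. T i $$ (y, x) * cnj (c i)) = cnj (X $$ (x, y))" if "x < N" "y < N" for x y
  proof -
    have "(\<Sum>i\<in>I. T i $$ (y, x) * cnj (c i))
        = (\<Sum>x'<N. \<Sum>y'<N. cnj (X $$ (x', y')) * (\<Sum>i\<in>I. T i $$ (y, x) * T i $$ (x', y')))"
      by (simp add: cnj_c_sum sum_distrib_left sum_distrib_right sum.swap[of _ I] mult_ac cong: sum.cong)
    also have "\<dots> = (\<Sum>x'<N. if x' = x then cnj (X $$ (x, y)) else 0)"
    proof (intro sum.cong refl)
      fix x' assume "x' \<in> {..<N}"
      then show "(\<Sum>y'<N. cnj (X $$ (x', y')) * (\<Sum>i\<in>I. T i $$ (y, x) * T i $$ (x', y')))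
          = (if x' = x then cnj (X $$ (x, y)) else 0)"
        using T(1) that unfolding complete_operator_family_def
        by (cases "x' = x") (auto simp: if_distrib[of "(*) _"] cong: if_cong)
    qed
    also have "\<dots> = cnj (X $$ (x, y))"
      using that by simp
    finally show ?thesis .
  qed
  have "complex_of_real (\<Sum>i\<in>I. (cmod (c i))\<^sup>2) = (\<Sum>i\<in>I. c i * cnj (c i))"
    unfolding of_real_sum complex_norm_square ..
  also have "\<dots> = (\<Sum>i\<in>I. \<Sum>x<N. \<Sum>y<N. X $$ (x, y) * (T i $$ (y, x) * cnj (c i)))"
    by (intro sum.cong refl, subst c_sum) (simp_all add: sum_distrib_right mult.assoc)
  also have "\<dots> = (\<Sum>x<N. \<Sum>y<N. X $$ (x, y) * (\<Sum>i\<in>I. T i $$ (y, x) * cnj (c i)))"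
    by (simp add: sum_distrib_left sum.swap[of _ I])
  also have "\<dots> = complex_of_real (hs_norm_sq X)"
    using X unfolding hs_norm_sq_eq_sum[OF X] of_real_sum complex_norm_square by (simp add: cnj_c)
  finally show ?thesis
    unfolding c_def of_real_eq_iff .
qed

lemma M12_sq_eq_hs_norm_sq:
  assumes As: "herm_onb dA As" and Bs: "herm_onb dB Bs" and X: "X \<in> carrier_mat (dA * dB) (dA * dB)"
  shows "(M12 dA dB As Bs X)\<^sup>2 = hs_norm_sq X"
proof -
  let ?T = "\<lambda>(i, j). tensor_mat (As i) (Bs j)"
  have "complete_operator_family (dA * dB) ({..<dA\<^sup>2} \<times> {..<dB\<^sup>2}) ?T"
    using As Bs by (intro complete_operator_family_tensor herm_onb_complete) (auto simp: herm_onb_carrier_mat)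
  moreover have "hermitian_mat (dA * dB) (?T ij)" if "ij \<in> {..<dA\<^sup>2} \<times> {..<dB\<^sup>2}" for ij
    using that As Bs unfolding herm_onb_def hermitian_mat_def by (auto simp: mat_adjoint_tensor_mat)
  ultimately have "(\<Sum>ij\<in>{..<dA\<^sup>2} \<times> {..<dB\<^sup>2}. (cmod (mtrace (X * ?T ij)))\<^sup>2) = hs_norm_sq X"
    using X by (rule parseval_complete_operator_family)
  then have "(\<Sum>i<dA\<^sup>2. \<Sum>j<dB\<^sup>2. (cmod (corr_entry As Bs X i j))\<^sup>2) = hs_norm_sq X"
    unfolding corr_entry_def sum.cartesian_product by (simp add: case_prod_unfold)
  then show ?thesis
    unfolding M12_def using hs_norm_sq_nonneg[OF X] by simp
qed

section \<open>Positive semidefinite matrices\<close>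

definition psd_mat :: "nat \<Rightarrow> complex mat \<Rightarrow> bool" where
  "psd_mat n M \<longleftrightarrow> (\<forall>v \<in> carrier_vec n. 0 \<le> (M *\<^sub>v v) \<bullet>c v)"

lemma is_state_iff: "is_state n \<sigma> \<longleftrightarrow> hermitian_mat n \<sigma> \<and> psd_mat n \<sigma> \<and> mtrace \<sigma> = 1"
  unfolding is_state_def psd_mat_def ..

lemma mat_adjoint_cscalar_prod:
  fixes V :: "complex mat"
  assumes V: "V \<in> carrier_mat n m" and w: "w \<in> carrier_vec n" and v: "v \<in> carrier_vec m"
  shows "(mat_adjoint V *\<^sub>v w) \<bullet>c v = w \<bullet>c (V *\<^sub>v v)"
proof -
  have "(mat_adjoint V *\<^sub>v w) \<bullet>c v = (\<Sum>j<m. \<Sum>i<n. w $ i * cnj (V $$ (i, j) * v $ j))"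
    using V w v
    by (simp add: cscalar_prod_eq_sum[of _ m] scalar_prod_def atLeast0LessThan sum_distrib_left mult_ac)
  also have "\<dots> = w \<bullet>c (V *\<^sub>v v)"
    using V w v
    by (simp add: cscalar_prod_eq_sum[of _ n] scalar_prod_def atLeast0LessThan cnj_sum sum_distrib_left
        sum.swap[of _ "{..<m}"])
  finally show ?thesis .
qed

lemma psd_mat_congruence:
  assumes M: "M \<in> carrier_mat n n" "psd_mat n M" and V: "V \<in> carrier_mat n m"
  shows "psd_mat m (mat_adjoint V * M * V)"
  unfolding psd_mat_def
proof
  fix v :: "complex vec" assume v: "v \<in> carrier_vec m"
  have Vv: "V *\<^sub>v v \<in> carrier_vec n" and Va: "mat_adjoint V \<in> carrier_mat m n"
    using V v by simp_all
  have VaM: "mat_adjoint V * M \<in> carrier_mat m n"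
    using Va M by simp
  have "mat_adjoint V * M * V *\<^sub>v v = mat_adjoint V *\<^sub>v (M *\<^sub>v (V *\<^sub>v v))"
    using assoc_mult_mat_vec[OF VaM V v] assoc_mult_mat_vec[OF Va M(1) Vv] by simp
  then have "(mat_adjoint V * M * V *\<^sub>v v) \<bullet>c v = (M *\<^sub>v (V *\<^sub>v v)) \<bullet>c (V *\<^sub>v v)"
    using M Vv by (simp add: mat_adjoint_cscalar_prod[OF V _ v])
  also have "0 \<le> \<dots>"
    using M V v unfolding psd_mat_def by simp
  finally show "0 \<le> (mat_adjoint V * M * V *\<^sub>v v) \<bullet>c v" .
qed

lemma hermitian_mat_congruence:
  assumes M: "hermitian_mat n M" and V: "V \<in> carrier_mat n m"
  shows "hermitian_mat m (mat_adjoint V * M * V)"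
proof -
  have M: "M \<in> carrier_mat n n" "mat_adjoint M = M"
    using assms unfolding hermitian_mat_def by auto
  have Va: "mat_adjoint V \<in> carrier_mat m n"
    using V by simp
  have VaM: "mat_adjoint V * M \<in> carrier_mat m n"
    using Va M by simp
  have "mat_adjoint (mat_adjoint V * M * V) = mat_adjoint V * (M * V)"
    using mat_adjoint_mult[OF VaM V] mat_adjoint_mult[OF Va M(1)] M(2) by simp
  also have "\<dots> = mat_adjoint V * M * V"
    using assoc_mult_mat[OF Va M(1) V] by simp
  finally show ?thesis
    using VaM V unfolding hermitian_mat_def by simp
qed

lemma sum_two_points:
  assumes "b \<noteq> d" "b < n" "d < (n :: nat)"
  shows "(\<Sum>i<n. f i * (if i = b then x else if i = d then y else 0)) = f b * x + f d * (y :: complex)"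
proof -
  have "(\<Sum>i<n. f i * (if i = b then x else if i = d then y else 0))
      = (\<Sum>i<n. (if i = b then f b * x else 0) + (if i = d then f d * y else 0))"
    using assms by (intro sum.cong) auto
  also have "\<dots> = f b * x + f d * y"
    using assms by (simp add: sum.distrib)
  finally show ?thesis .
qed

lemma psd_mat_diag_nonneg:
  assumes M: "M \<in> carrier_mat n n" and P: "psd_mat n M" and b: "b < n"
  shows "0 \<le> M $$ (b, b)"
proof -
  have "(M *\<^sub>v unit_vec n b) $ i = M $$ (i, b)" if "i < n" for i
    using M b that by simp
  then have "(M *\<^sub>v unit_vec n b) \<bullet>c unit_vec n b = (\<Sum>i<n. if i = b then M $$ (b, b) else 0)"
    by (intro trans[OF cscalar_prod_eq_sum[of _ n]] sum.cong) (auto simp: unit_vec_def)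
  moreover have "0 \<le> (M *\<^sub>v unit_vec n b) \<bullet>c unit_vec n b"
    using P unit_vec_carrier unfolding psd_mat_def by blast
  ultimately show ?thesis
    using b by simp
qed

lemma psd_mat_zero_diagonal:
  assumes H: "hermitian_mat n M" and P: "psd_mat n M" and Z: "\<And>b. b < n \<Longrightarrow> M $$ (b, b) = 0"
  shows "M = 0\<^sub>m n n"
proof (rule eq_matI)
  have M: "M \<in> carrier_mat n n"
    using H unfolding hermitian_mat_def by auto
  fix b d assume "b < dim_row (0\<^sub>m n n :: complex mat)" "d < dim_col (0\<^sub>m n n :: complex mat)"
  then have bd: "b < n" "d < n" by auto
  show "M $$ (b, d) = 0\<^sub>m n n $$ (b, d)"
  proof (cases "b = d")
    case True
    then show ?thesis using Z bd by simp
  next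
    case False
    \<comment> \<open>Test positivity on \<open>v = t e\<^sub>b + e\<^sub>d\<close> with \<open>t = - M\<^sub>b\<^sub>d\<close>.\<close>
    define t where "t = - M $$ (b, d)"
    define v :: "complex vec" where "v = vec n (\<lambda>i. if i = b then t else if i = d then 1 else 0)"
    have v: "v \<in> carrier_vec n" "\<And>i. i < n \<Longrightarrow> v $ i = (if i = b then t else if i = d then 1 else 0)"
      unfolding v_def by auto
    have Mv: "(M *\<^sub>v v) $ i = M $$ (i, b) * t + M $$ (i, d)" if "i < n" for i
    proof -
      have "(M *\<^sub>v v) $ i = (\<Sum>j<n. M $$ (i, j) * (if j = b then t else if j = d then 1 else 0))"
        using M v that by (auto simp: scalar_prod_def atLeast0LessThan intro!: sum.cong)
      then show ?thesis
        using sum_two_points[OF False bd] by simp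
    qed
    have "(M *\<^sub>v v) \<bullet>c v = (\<Sum>i<n. (M *\<^sub>v v) $ i * (if i = b then cnj t else if i = d then 1 else 0))"
      using v by (auto simp: cscalar_prod_eq_sum[of _ n] intro!: sum.cong)
    also have "\<dots> = (M $$ (b, b) * t + M $$ (b, d)) * cnj t + (M $$ (d, b) * t + M $$ (d, d))"
      using sum_two_points[OF False bd] Mv bd by simp
    also have "\<dots> = - 2 * complex_of_real ((cmod (M $$ (b, d)))\<^sup>2)"
      using Z bd hermitian_mat_cnj[OF H bd] unfolding t_def complex_norm_square by simp
    finally have "0 \<le> - 2 * complex_of_real ((cmod (M $$ (b, d)))\<^sup>2)"
      using P v unfolding psd_mat_def by metis
    then show ?thesis
      using bd by (simp add: less_eq_complex_def)
  qed
qed (use H in \<open>auto simp: hermitian_mat_def\<close>)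

lemma psd_mat_mtrace_nonneg: "M \<in> carrier_mat n n \<Longrightarrow> psd_mat n M \<Longrightarrow> 0 \<le> mtrace M"
  unfolding mtrace_def by (auto intro!: sum_nonneg psd_mat_diag_nonneg)

lemma psd_mat_mtrace_zero:
  assumes H: "hermitian_mat n M" and P: "psd_mat n M" and T: "mtrace M = 0"
  shows "M = 0\<^sub>m n n"
proof (rule psd_mat_zero_diagonal[OF H P])
  have M: "M \<in> carrier_mat n n"
    using H unfolding hermitian_mat_def by auto
  then have "\<forall>b\<in>{..<n}. M $$ (b, b) = 0"
    using T psd_mat_diag_nonneg[OF M P] unfolding mtrace_def by (subst sum_nonneg_eq_0_iff[symmetric]) auto
  then show "M $$ (b, b) = 0" if "b < n" for b
    using that by simp
qed

lemma is_state_normalized: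
  assumes H: "hermitian_mat n M" and P: "psd_mat n M" and T: "mtrace M = complex_of_real p" and p: "p > 0"
  shows "is_state n (complex_of_real (1 / p) \<cdot>\<^sub>m M)"
  unfolding is_state_iff
proof (intro conjI)
  have M: "M \<in> carrier_mat n n" "mat_adjoint M = M"
    using H unfolding hermitian_mat_def by auto
  then show "hermitian_mat n (complex_of_real (1 / p) \<cdot>\<^sub>m M)"
    unfolding hermitian_mat_def by (simp add: mat_adjoint_smult)
  show "psd_mat n (complex_of_real (1 / p) \<cdot>\<^sub>m M)"
    unfolding psd_mat_def
  proof
    fix v :: "complex vec" assume v: "v \<in> carrier_vec n"
    have "(complex_of_real (1 / p) \<cdot>\<^sub>m M) *\<^sub>v v = complex_of_real (1 / p) \<cdot>\<^sub>v (M *\<^sub>v v)"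
      using M v by (intro eq_vecI) (auto simp: scalar_prod_def sum_distrib_left mult.assoc)
    then have "((complex_of_real (1 / p) \<cdot>\<^sub>m M) *\<^sub>v v) \<bullet>c v = complex_of_real (1 / p) * ((M *\<^sub>v v) \<bullet>c v)"
      using M v by simp
    moreover have "0 \<le> (M *\<^sub>v v) \<bullet>c v"
      using P v unfolding psd_mat_def by blast
    ultimately show "0 \<le> ((complex_of_real (1 / p) \<cdot>\<^sub>m M) *\<^sub>v v) \<bullet>c v"
      using p by (simp add: less_eq_complex_def)
  qed
  show "mtrace (complex_of_real (1 / p) \<cdot>\<^sub>m M) = 1"
    using M T p unfolding mtrace_def by (simp add: sum_divide_distrib[symmetric])
qed

(* The state sigma only serves as the witness when M = 0. *)
lemma psd_mat_eq_smult_state: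
  assumes H: "hermitian_mat n M" and P: "psd_mat n M" and \<sigma>: "is_state n \<sigma>"
  obtains \<chi> where "is_state n \<chi>" "M = complex_of_real (Re (mtrace M)) \<cdot>\<^sub>m \<chi>"
proof -
  have M: "M \<in> carrier_mat n n"
    using H unfolding hermitian_mat_def by simp
  have tr: "mtrace M = complex_of_real (Re (mtrace M))" "0 \<le> Re (mtrace M)"
    using psd_mat_mtrace_nonneg[OF M P] by (auto simp: less_eq_complex_def complex_eq_iff)
  show ?thesis
  proof (cases "Re (mtrace M) > 0")
    case True
    show ?thesis
    proof
      show "is_state n (complex_of_real (1 / Re (mtrace M)) \<cdot>\<^sub>m M)"
        using is_state_normalized[OF H P tr(1) True] .
      show "M = complex_of_real (Re (mtrace M)) \<cdot>\<^sub>m (complex_of_real (1 / Re (mtrace M)) \<cdot>\<^sub>m M)"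
        using M True by (auto intro!: eq_matI simp flip: of_real_mult)
    qed
  next
    case False
    then have "M = 0\<^sub>m n n"
      using tr psd_mat_mtrace_zero[OF H P] by simp
    moreover have "\<sigma> \<in> carrier_mat n n"
      using \<sigma> unfolding is_state_iff hermitian_mat_def by simp
    ultimately have "M = complex_of_real (Re (mtrace M)) \<cdot>\<^sub>m \<sigma>"
      using False tr(2) by (auto intro!: eq_matI)
    then show ?thesis
      using that \<sigma> by blast
  qed
qed

section \<open>Projective measurements on the first factor\<close>

definition meas_proj :: "nat \<Rightarrow> (nat \<Rightarrow> complex vec) \<Rightarrow> nat \<Rightarrow> complex mat" where
  "meas_proj dB u l = tensor_mat (ket_bra (u l)) (1\<^sub>m dB)"

lemma proj_meas_A_eq_pinching: "proj_meas_A dA dB u = pinching (dA * dB) (meas_proj dB u) {..<dA}"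
  unfolding proj_meas_A_def pinching_def meas_proj_def ..

lemma proj_meas_A_carrier_mat [simp]: "proj_meas_A dA dB u X \<in> carrier_mat (dA * dB) (dA * dB)"
  unfolding proj_meas_A_eq_pinching by simp

lemma meas_proj_carrier_mat: "vec_onb dA u \<Longrightarrow> l < dA \<Longrightarrow> meas_proj dB u l \<in> carrier_mat (dA * dB) (dA * dB)"
  unfolding meas_proj_def by (simp add: vec_onb_carrier_vec)

lemma orthogonal_projections_meas_proj:
  assumes u: "vec_onb dA u"
  shows "orthogonal_projections (dA * dB) (meas_proj dB u) {..<dA}"
  unfolding orthogonal_projections_def
proof (intro conjI ballI)
  fix l m assume "l \<in> {..<dA}" "m \<in> {..<dA}"
  then have l: "l < dA" and m: "m < dA" by auto
  show "hermitian_mat (dA * dB) (meas_proj dB u l)"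
    using meas_proj_carrier_mat[OF u l] unfolding hermitian_mat_def meas_proj_def
    by (simp add: mat_adjoint_tensor_mat mat_adjoint_ket_bra)
  have "meas_proj dB u l * meas_proj dB u m = tensor_mat (ket_bra (u l) * ket_bra (u m)) (1\<^sub>m dB * 1\<^sub>m dB)"
    unfolding meas_proj_def using u l m by (simp add: tensor_mat_mult[of _ dA dA _ dB dB _ dA _ dB] vec_onb_carrier_vec)
  then show "meas_proj dB u l * meas_proj dB u m = (if l = m then meas_proj dB u l else 0\<^sub>m (dA * dB) (dA * dB))"
    using u l m by (simp add: ket_bra_mult_ket_bra meas_proj_def tensor_mat_zero_left)
qed

lemma meas_proj_sandwich_tensor_mat:
  assumes u: "vec_onb dA u" and k: "k < dA" and Y: "Y \<in> carrier_mat dB dB"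
  shows "meas_proj dB u k * tensor_mat (1\<^sub>m dA) Y * meas_proj dB u k = tensor_mat (ket_bra (u k)) Y"
proof -
  have P: "ket_bra (u k) \<in> carrier_mat dA dA"
    using u k by (simp add: vec_onb_carrier_vec)
  have "meas_proj dB u k * tensor_mat (1\<^sub>m dA) Y * meas_proj dB u k
      = tensor_mat (ket_bra (u k) * 1\<^sub>m dA * ket_bra (u k)) (1\<^sub>m dB * Y * 1\<^sub>m dB)"
    unfolding meas_proj_def using P Y by (simp add: tensor_mat_mult[of _ dA dA _ dB dB _ dA _ dB])
  also have "\<dots> = tensor_mat (ket_bra (u k)) Y"
    using ket_bra_mult_ket_bra[OF u k k] right_mult_one_mat[OF P] Y by simp
  finally show ?thesis .
qed

lemma cq_state_fixed_by_proj_meas_A: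
  assumes "\<chi> \<in> cq_states dA dB"
  shows "\<exists>u. vec_onb dA u \<and> \<chi> \<in> carrier_mat (dA * dB) (dA * dB) \<and> proj_meas_A dA dB u \<chi> = \<chi>"
proof -
  obtain u p \<chi>s where u: "vec_onb dA u" and states: "\<forall>k<dA. is_state dB (\<chi>s k)"
    and \<chi>: "\<chi> = msum (dA * dB) (dA * dB) (\<lambda>k. complex_of_real (p k) \<cdot>\<^sub>m tensor_mat (ket_bra (u k)) (\<chi>s k)) {..<dA}"
    using assms unfolding cq_states_def by blast
  let ?Y = "\<lambda>k. tensor_mat (1\<^sub>m dA) (complex_of_real (p k) \<cdot>\<^sub>m \<chi>s k)"
  have Y: "complex_of_real (p k) \<cdot>\<^sub>m \<chi>s k \<in> carrier_mat dB dB" if "k < dA" for k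
    using states that unfolding is_state_def hermitian_mat_def by auto
  have "\<chi> = msum (dA * dB) (dA * dB) (\<lambda>k. meas_proj dB u k * ?Y k * meas_proj dB u k) {..<dA}"
    unfolding \<chi> smult_tensor_mat using meas_proj_sandwich_tensor_mat[OF u _ Y] by (intro msum_cong) simp
  moreover have "?Y k \<in> carrier_mat (dA * dB) (dA * dB)" if "k \<in> {..<dA}" for k
    using Y that by simp
  ultimately have "proj_meas_A dA dB u \<chi> = \<chi>"
    unfolding proj_meas_A_eq_pinching
    using pinching_sandwich_sum[OF _ orthogonal_projections_meas_proj[OF u]] by simp
  then show ?thesis
    using u \<chi> by auto
qed

definition ket_mat :: "complex vec \<Rightarrow> complex mat" where
  "ket_mat v = mat (dim_vec v) 1 (\<lambda>(i, _). v $ i)"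

definition ket_tensor_id :: "nat \<Rightarrow> complex vec \<Rightarrow> complex mat" where
  "ket_tensor_id dB v = tensor_mat (ket_mat v) (1\<^sub>m dB)"

(* (<v| (x) 1) rho (|v> (x) 1): the unnormalised state of B after outcome v on A. *)
definition partial_matrix_element :: "nat \<Rightarrow> complex vec \<Rightarrow> complex mat \<Rightarrow> complex mat" where
  "partial_matrix_element dB v \<rho> = mat_adjoint (ket_tensor_id dB v) * \<rho> * ket_tensor_id dB v"

lemma ket_mat_carrier_mat: "v \<in> carrier_vec n \<Longrightarrow> ket_mat v \<in> carrier_mat n 1"
  unfolding ket_mat_def by auto

lemma ket_bra_eq_ket_mat: "ket_bra v = ket_mat v * mat_adjoint (ket_mat v)"
  unfolding ket_mat_def by (rule eq_matI) (auto simp: scalar_prod_def)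

lemma ket_tensor_id_carrier_mat: "v \<in> carrier_vec dA \<Longrightarrow> ket_tensor_id dB v \<in> carrier_mat (dA * dB) dB"
  unfolding ket_tensor_id_def using tensor_mat_carrier_mat[OF ket_mat_carrier_mat, of v dA "1\<^sub>m dB" dB dB]
  by simp

lemma partial_matrix_element_carrier_mat:
  "v \<in> carrier_vec dA \<Longrightarrow> \<rho> \<in> carrier_mat (dA * dB) (dA * dB) \<Longrightarrow>
    partial_matrix_element dB v \<rho> \<in> carrier_mat dB dB"
  unfolding partial_matrix_element_def using ket_tensor_id_carrier_mat[of v dA dB]
  by (meson mat_adjoint_carrier_mat mult_carrier_mat)

lemma meas_proj_eq_ket_tensor_id:
  assumes "u k \<in> carrier_vec dA"
  shows "meas_proj dB u k = ket_tensor_id dB (u k) * mat_adjoint (ket_tensor_id dB (u k))"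
proof -
  have K: "ket_mat (u k) \<in> carrier_mat dA 1"
    using assms by (rule ket_mat_carrier_mat)
  have "ket_tensor_id dB (u k) * mat_adjoint (ket_tensor_id dB (u k))
      = tensor_mat (ket_mat (u k) * mat_adjoint (ket_mat (u k))) (1\<^sub>m dB * 1\<^sub>m dB)"
    unfolding ket_tensor_id_def mat_adjoint_tensor_mat mat_adjoint_one
    by (rule tensor_mat_mult[OF K one_carrier_mat mat_adjoint_carrier_mat[OF K] one_carrier_mat])
  then show ?thesis
    unfolding meas_proj_def ket_bra_eq_ket_mat by simp
qed

lemma meas_proj_sandwich:
  assumes u: "u k \<in> carrier_vec dA" and \<rho>: "\<rho> \<in> carrier_mat (dA * dB) (dA * dB)"
  shows "meas_proj dB u k * \<rho> * meas_proj dB u k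
    = tensor_mat (ket_bra (u k)) (partial_matrix_element dB (u k) \<rho>)"
proof -
  let ?V = "ket_tensor_id dB (u k)"
  let ?R = "partial_matrix_element dB (u k) \<rho>"
  have V: "?V \<in> carrier_mat (dA * dB) dB" and Va: "mat_adjoint ?V \<in> carrier_mat dB (dA * dB)"
    using ket_tensor_id_carrier_mat[OF u] by auto
  have K: "ket_mat (u k) \<in> carrier_mat dA 1"
    using u by (rule ket_mat_carrier_mat)
  have R: "?R \<in> carrier_mat dB dB"
    using u \<rho> by (rule partial_matrix_element_carrier_mat)
  have "meas_proj dB u k * \<rho> * meas_proj dB u k = ?V * ?R * mat_adjoint ?V"
    unfolding meas_proj_eq_ket_tensor_id[where u = u and k = k, OF u] partial_matrix_element_def
    using mult_sandwich_assoc[OF V Va \<rho>] by simp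
  also have "?V * ?R = tensor_mat (ket_mat (u k)) ?R"
    using tensor_mat_mult[OF K one_carrier_mat one_carrier_mat R] K R
    unfolding ket_tensor_id_def tensor_mat_one_left by simp
  also have "tensor_mat (ket_mat (u k)) ?R * mat_adjoint ?V
      = tensor_mat (ket_mat (u k) * mat_adjoint (ket_mat (u k))) (?R * 1\<^sub>m dB)"
    unfolding ket_tensor_id_def mat_adjoint_tensor_mat mat_adjoint_one
    by (rule tensor_mat_mult[OF K R mat_adjoint_carrier_mat[OF K] one_carrier_mat])
  also have "\<dots> = tensor_mat (ket_bra (u k)) ?R"
    using R by (simp add: ket_bra_eq_ket_mat)
  finally show ?thesis .
qed

lemma msum_meas_proj:
  assumes u: "vec_onb dA u"
  shows "msum (dA * dB) (dA * dB) (meas_proj dB u) {..<dA} = 1\<^sub>m (dA * dB)"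
proof -
  have "msum (dA * dB) (dA * dB) (meas_proj dB u) {..<dA}
      = tensor_mat (msum dA dA (\<lambda>k. ket_bra (u k)) {..<dA}) (1\<^sub>m dB)"
    unfolding meas_proj_def using u by (intro msum_tensor_mat_left) (auto simp: vec_onb_carrier_vec)
  then show ?thesis
    by (simp add: msum_ket_bra_vec_onb[OF u] tensor_mat_one)
qed

lemma sum_mtrace_partial_matrix_element:
  assumes u: "vec_onb dA u" and \<rho>: "\<rho> \<in> carrier_mat (dA * dB) (dA * dB)"
  shows "(\<Sum>k<dA. mtrace (partial_matrix_element dB (u k) \<rho>)) = mtrace \<rho>"
proof -
  have "mtrace (partial_matrix_element dB (u k) \<rho>) = hs_inner (meas_proj dB u k) \<rho>" if k: "k < dA" for k
  proof -
    let ?V = "ket_tensor_id dB (u k)"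
    have V: "?V \<in> carrier_mat (dA * dB) dB" and uk: "u k \<in> carrier_vec dA"
      using u k by (simp_all add: vec_onb_carrier_vec ket_tensor_id_carrier_mat)
    have "mtrace (partial_matrix_element dB (u k) \<rho>) = mtrace (?V * (mat_adjoint ?V * \<rho>))"
      unfolding partial_matrix_element_def using V \<rho> by (intro mtrace_mult_comm) auto
    also have "\<dots> = mtrace (meas_proj dB u k * \<rho>)"
      using assoc_mult_mat[OF V mat_adjoint_carrier_mat[OF V] \<rho>]
      by (simp add: meas_proj_eq_ket_tensor_id[where u = u and k = k, OF uk])
    also have "\<dots> = hs_inner (meas_proj dB u k) \<rho>"
      using orthogonal_projections_meas_proj[OF u] k
      unfolding hs_inner_def orthogonal_projections_def hermitian_mat_def by simp
    finally show ?thesis .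
  qed
  then have "(\<Sum>k<dA. mtrace (partial_matrix_element dB (u k) \<rho>)) = (\<Sum>k<dA. hs_inner (meas_proj dB u k) \<rho>)"
    by simp
  also have "\<dots> = hs_inner (msum (dA * dB) (dA * dB) (meas_proj dB u) {..<dA}) \<rho>"
    using meas_proj_carrier_mat[OF u] \<rho> by (intro hs_inner_msum_left[symmetric]) auto
  also have "\<dots> = hs_inner (1\<^sub>m (dA * dB)) \<rho>"
    unfolding msum_meas_proj[OF u] ..
  also have "\<dots> = mtrace \<rho>"
    using \<rho> unfolding hs_inner_def by simp
  finally show ?thesis .
qed

lemma partial_matrix_element_hermitian_psd:
  assumes \<rho>: "is_state (dA * dB) \<rho>" and v: "v \<in> carrier_vec dA"
  shows "hermitian_mat dB (partial_matrix_element dB v \<rho>)" "psd_mat dB (partial_matrix_element dB v \<rho>)"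
proof -
  have \<rho>H: "hermitian_mat (dA * dB) \<rho>" and \<rho>P: "psd_mat (dA * dB) \<rho>"
    using \<rho> unfolding is_state_iff by auto
  then have \<rho>C: "\<rho> \<in> carrier_mat (dA * dB) (dA * dB)"
    unfolding hermitian_mat_def by simp
  show "hermitian_mat dB (partial_matrix_element dB v \<rho>)"
    unfolding partial_matrix_element_def using \<rho>H ket_tensor_id_carrier_mat[OF v] by (rule hermitian_mat_congruence)
  show "psd_mat dB (partial_matrix_element dB v \<rho>)"
    unfolding partial_matrix_element_def using \<rho>C \<rho>P ket_tensor_id_carrier_mat[OF v] by (rule psd_mat_congruence)
qed

lemma proj_meas_A_in_cq_states:
  assumes u: "vec_onb dA u" and \<rho>: "is_state (dA * dB) \<rho>"
  shows "proj_meas_A dA dB u \<rho> \<in> cq_states dA dB"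
proof -
  have \<rho>C: "\<rho> \<in> carrier_mat (dA * dB) (dA * dB)" and \<rho>T: "mtrace \<rho> = 1"
    using \<rho> unfolding is_state_iff hermitian_mat_def by auto
  define r where "r k = partial_matrix_element dB (u k) \<rho>" for k
  define p where "p k = Re (mtrace (r k))" for k
  have rH: "hermitian_mat dB (r k)" and rP: "psd_mat dB (r k)" if "k < dA" for k
    unfolding r_def using partial_matrix_element_hermitian_psd[OF \<rho> vec_onb_carrier_vec[OF u that]] by auto
  have p: "mtrace (r k) = complex_of_real (p k)" "0 \<le> p k" if "k < dA" for k
    using psd_mat_mtrace_nonneg[OF _ rP[OF that]] rH[OF that] unfolding p_def hermitian_mat_def
    by (auto simp: less_eq_complex_def complex_eq_iff)
  have p_sum: "(\<Sum>k<dA. p k) = 1"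
    using sum_mtrace_partial_matrix_element[OF u \<rho>C] \<rho>T unfolding p_def r_def
    by (simp flip: Re_sum)
  have "\<exists>j<dA. p j > 0"
  proof (rule ccontr)
    assume "\<not> (\<exists>j<dA. p j > 0)"
    then have "\<forall>k<dA. p k = 0"
      using p(2) by (meson antisym not_less)
    then show False
      using p_sum by simp
  qed
  then obtain j where j: "j < dA" "p j > 0"
    by blast
  then have \<sigma>: "is_state dB (complex_of_real (1 / p j) \<cdot>\<^sub>m r j)"
    using is_state_normalized[OF rH rP p(1)] by simp
  have "\<forall>k. \<exists>\<chi>. k < dA \<longrightarrow> is_state dB \<chi> \<and> r k = complex_of_real (p k) \<cdot>\<^sub>m \<chi>"
    using psd_mat_eq_smult_state[OF rH rP \<sigma>] unfolding p_def by metis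
  then obtain \<chi> where \<chi>: "\<And>k. k < dA \<Longrightarrow> is_state dB (\<chi> k) \<and> r k = complex_of_real (p k) \<cdot>\<^sub>m \<chi> k"
    by metis
  have "proj_meas_A dA dB u \<rho>
      = msum (dA * dB) (dA * dB) (\<lambda>k. complex_of_real (p k) \<cdot>\<^sub>m tensor_mat (ket_bra (u k)) (\<chi> k)) {..<dA}"
    unfolding proj_meas_A_eq_pinching pinching_def smult_tensor_mat
    using meas_proj_sandwich[OF vec_onb_carrier_vec[OF u] \<rho>C] \<chi> unfolding r_def
    by (intro msum_cong) simp
  then show ?thesis
    unfolding cq_states_def using u p(2) p_sum \<chi> by blast
qed

section \<open>Both discords as an infimum over measurements\<close>

lemma cInf_eq_of_dominating_subset:
  fixes S T :: "'a :: conditionally_complete_lattice set"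
  assumes sub: "S \<subseteq> T" and ne: "S \<noteq> {}" and bdd: "bdd_below T"
    and dom: "\<And>t. t \<in> T \<Longrightarrow> \<exists>s\<in>S. s \<le> t"
  shows "Inf T = Inf S"
proof (rule antisym)
  show "Inf T \<le> Inf S"
    using ne bdd sub by (rule cInf_superset_mono)
  show "Inf S \<le> Inf T"
  proof (rule cInf_greatest)
    show "T \<noteq> {}"
      using ne sub by blast
    fix t assume "t \<in> T"
    then obtain s where "s \<in> S" "s \<le> t"
      using dom by blast
    then show "Inf S \<le> t"
      using cInf_lower[OF _ bdd_below_mono[OF bdd sub]] order_trans by blast
  qed
qed

lemma hs_norm_sq_proj_meas_A_pythagoras:
  assumes "vec_onb dA u" "X \<in> carrier_mat (dA * dB) (dA * dB)" "Y \<in> carrier_mat (dA * dB) (dA * dB)"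
    and "proj_meas_A dA dB u Y = Y"
  shows "hs_norm_sq (X - Y)
    = hs_norm_sq (X - proj_meas_A dA dB u X) + hs_norm_sq (proj_meas_A dA dB u X - Y)"
  using assms unfolding proj_meas_A_eq_pinching
  by (intro hs_norm_sq_pinching_pythagoras orthogonal_projections_meas_proj) simp_all

lemma hs_norm_sq_proj_meas_A:
  assumes u: "vec_onb dA u" and X: "X \<in> carrier_mat (dA * dB) (dA * dB)"
  shows "hs_norm_sq (proj_meas_A dA dB u X) = hs_norm_sq X - hs_norm_sq (X - proj_meas_A dA dB u X)"
proof -
  let ?Z = "0\<^sub>m (dA * dB) (dA * dB) :: complex mat"
  have "proj_meas_A dA dB u ?Z = ?Z"
    unfolding proj_meas_A_eq_pinching using orthogonal_projections_meas_proj[OF u] by (rule pinching_zero)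
  moreover have "Y - ?Z = Y" if "Y \<in> carrier_mat (dA * dB) (dA * dB)" for Y
    using that by (intro eq_matI) auto
  ultimately show ?thesis
    using hs_norm_sq_proj_meas_A_pythagoras[OF u X, of ?Z] X by simp
qed

lemma geometric_discord_A_eq_INF:
  assumes \<rho>: "is_state (dA * dB) \<rho>"
  shows "geometric_discord_A dA dB \<rho>
    = (INF u\<in>{u. vec_onb dA u}. hs_norm_sq (\<rho> - proj_meas_A dA dB u \<rho>))"
proof -
  let ?d = "\<lambda>u. hs_norm_sq (\<rho> - proj_meas_A dA dB u \<rho>)"
  let ?T = "{hs_norm_sq (\<rho> - \<chi>) | \<chi>. \<chi> \<in> cq_states dA dB}"
  have \<rho>C: "\<rho> \<in> carrier_mat (dA * dB) (dA * dB)"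
    using \<rho> unfolding is_state_iff hermitian_mat_def by simp
  have "?d ` {u. vec_onb dA u} \<subseteq> ?T"
    using proj_meas_A_in_cq_states[OF _ \<rho>] by blast
  moreover have "?d ` {u. vec_onb dA u} \<noteq> {}"
    using vec_onb_unit_vec by blast
  moreover have "bdd_below ?T"
    using cq_state_fixed_by_proj_meas_A hs_norm_sq_nonneg minus_carrier_mat
    by (intro bdd_belowI[of _ 0]) blast
  moreover have "\<exists>s\<in>?d ` {u. vec_onb dA u}. s \<le> t" if "t \<in> ?T" for t
  proof -
    obtain \<chi> u where t: "t = hs_norm_sq (\<rho> - \<chi>)" and u: "vec_onb dA u"
      and \<chi>: "\<chi> \<in> carrier_mat (dA * dB) (dA * dB)" "proj_meas_A dA dB u \<chi> = \<chi>"
      using \<open>t \<in> ?T\<close> cq_state_fixed_by_proj_meas_A by blast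
    have "?d u \<le> t"
      using hs_norm_sq_proj_meas_A_pythagoras[OF u \<rho>C \<chi>] hs_norm_sq_nonneg[OF minus_carrier_mat[OF \<chi>(1)]]
      unfolding t by simp
    then show ?thesis
      using u by blast
  qed
  ultimately show ?thesis
    unfolding geometric_discord_A_def by (rule cInf_eq_of_dominating_subset)
qed

lemma discord12_A_eq_INF:
  assumes \<rho>: "is_state (dA * dB) \<rho>" and As: "herm_onb dA As" and Bs: "herm_onb dB Bs"
  shows "discord12_A dA dB As Bs \<rho>
    = (INF u\<in>{u. vec_onb dA u}. hs_norm_sq (\<rho> - proj_meas_A dA dB u \<rho>))"
proof -
  let ?U = "{u. vec_onb dA u}"
  let ?d = "\<lambda>u. hs_norm_sq (\<rho> - proj_meas_A dA dB u \<rho>)"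
  have \<rho>C: "\<rho> \<in> carrier_mat (dA * dB) (dA * dB)"
    using \<rho> unfolding is_state_iff hermitian_mat_def by simp
  have U: "?U \<noteq> {}"
    using vec_onb_unit_vec by blast
  have d_bdd: "bdd_below (?d ` ?U)"
    using hs_norm_sq_nonneg minus_carrier_mat[OF proj_meas_A_carrier_mat] by (intro bdd_belowI[of _ 0]) blast
  have "{(M12 dA dB As Bs (proj_meas_A dA dB u \<rho>))\<^sup>2 | u. vec_onb dA u} = (\<lambda>u. hs_norm_sq \<rho> + - ?d u) ` ?U"
    unfolding setcompr_eq_image using \<rho>C
    by (intro image_cong refl)
      (simp add: M12_sq_eq_hs_norm_sq[OF As Bs] hs_norm_sq_proj_meas_A)
  then have "discord12_A dA dB As Bs \<rho> = hs_norm_sq \<rho> - (SUP u\<in>?U. hs_norm_sq \<rho> + - ?d u)"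
    unfolding discord12_A_def M12_sq_eq_hs_norm_sq[OF As Bs \<rho>C] by simp
  also have "\<dots> = - (SUP u\<in>?U. - ?d u)"
    using Sup_add_eq[OF _ U, of "\<lambda>u. - ?d u" "hs_norm_sq \<rho>"] d_bdd by (simp add: bdd_above_uminus_image)
  also have "\<dots> = (INF u\<in>?U. ?d u)"
    using uminus_cINF[OF d_bdd U] by simp
  finally show ?thesis .
qed

theorem mainTheorem6:
  fixes dA dB :: nat and \<rho> :: "complex mat"
    and As Bs :: "nat \<Rightarrow> complex mat"
  assumes "0 < dA" and "0 < dB"
    and "is_state (dA * dB) \<rho>"
    and "herm_onb dA As" and "herm_onb dB Bs"
  shows "geometric_discord_A dA dB \<rho> = discord12_A dA dB As Bs \<rho>"
  using geometric_discord_A_eq_INF[OF assms(3)] discord12_A_eq_INF[OF assms(3-5)] by simp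

end
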